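(* Let $(X,\mu)$ be a measure space with $\mu$ a non-negative finite Borel measure, let $\phi\in L^\infty(X,\mu)$, and let $M_\phi:L^2(X,\mu)\to L^2(X,\mu)$, $M_\phi f=\phi f$. (A) The following are equivalent: (i) $M_\phi$ is recurrent; (ii) $M_\phi$ is rigid; (iii) there is a strictly increasing sequence of positive integers $(k_n)$ such that $\phi(x)^{k_n}\to1$ as $n\to\infty$ for $\mu$-almost every $x\in X$. (B) The following are equivalent: (i) $M_\phi$ is uniformly rigid; (ii) there is a strictly increasing sequence of positive integers $(k_n)$ with $\|\phi^{k_n}-1\|_{L^\infty(X)}\to0$. In particular, if $M_\phi$ is recurrent then $|\phi|=1$ $\mu$-almost everywhere.
   Context: An operator $T$ on a Banach space $Y$ is recurrent if for every non-empty open $U\subset Y$ there is a positive integer $k$ with $U\cap T^{-k}(U)\neq\emptyset$; rigid if there is an increasing sequence of positive integers $(k_n)$ with $T^{k_n}y\to y$ for all $y\in Y$; uniformly rigid if there is an increasing sequence of positive integers $(k_n)$ with $\|T^{k_n}-I\|\to0$. *)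

theory Defs
  imports "HOL-Analysis.Analysis"
begin

text \<open>L^2(X,mu) of complex-valued functions, as a seminormed space of representatives
  (open sets of the quotient Banach space correspond exactly to open sets of this
  pseudometric topology).\<close>

definition L2 :: "'a measure \<Rightarrow> ('a \<Rightarrow> complex) set" where
  "L2 M = {f. f \<in> borel_measurable M \<and> integrable M (\<lambda>x. (cmod (f x))^2)}"

definition L2norm :: "'a measure \<Rightarrow> ('a \<Rightarrow> complex) \<Rightarrow> real" where
  "L2norm M f = sqrt (LINT x|M. (cmod (f x))^2)"

definition Linf :: "'a measure \<Rightarrow> ('a \<Rightarrow> complex) set" where
  "Linf M = {f. f \<in> borel_measurable M \<and> (\<exists>C. AE x in M. cmod (f x) \<le> C)}"

definition Linf_norm :: "'a measure \<Rightarrow> ('a \<Rightarrow> complex) \<Rightarrow> real" where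
  "Linf_norm M g = Inf {C. 0 \<le> C \<and> (AE x in M. cmod (g x) \<le> C)}"

definition Mmul :: "('a \<Rightarrow> complex) \<Rightarrow> ('a \<Rightarrow> complex) \<Rightarrow> ('a \<Rightarrow> complex)" where
  "Mmul \<phi> f = (\<lambda>x. \<phi> x * f x)"

definition L2open :: "'a measure \<Rightarrow> ('a \<Rightarrow> complex) set \<Rightarrow> bool" where
  "L2open M U \<longleftrightarrow> U \<subseteq> L2 M \<and>
     (\<forall>f\<in>U. \<exists>e>0. \<forall>g\<in>L2 M. L2norm M (\<lambda>x. g x - f x) < e \<longrightarrow> g \<in> U)"

definition L2opnorm :: "'a measure \<Rightarrow> (('a \<Rightarrow> complex) \<Rightarrow> ('a \<Rightarrow> complex)) \<Rightarrow> real" where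
  "L2opnorm M T = Sup {L2norm M (T f) | f. f \<in> L2 M \<and> L2norm M f \<le> 1}"

definition recurrent_L2 :: "'a measure \<Rightarrow> (('a \<Rightarrow> complex) \<Rightarrow> ('a \<Rightarrow> complex)) \<Rightarrow> bool" where
  "recurrent_L2 M T \<longleftrightarrow> (\<forall>U. L2open M U \<and> U \<noteq> {} \<longrightarrow>
      (\<exists>k::nat. 0 < k \<and> (\<exists>g\<in>U. (T ^^ k) g \<in> U)))"

definition rigid_L2 :: "'a measure \<Rightarrow> (('a \<Rightarrow> complex) \<Rightarrow> ('a \<Rightarrow> complex)) \<Rightarrow> bool" where
  "rigid_L2 M T \<longleftrightarrow> (\<exists>ks::nat \<Rightarrow> nat. strict_mono ks \<and> (\<forall>n. 0 < ks n) \<and>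
      (\<forall>f\<in>L2 M. (\<lambda>n. L2norm M (\<lambda>x. (T ^^ ks n) f x - f x)) \<longlonglongrightarrow> 0))"

definition unif_rigid_L2 :: "'a measure \<Rightarrow> (('a \<Rightarrow> complex) \<Rightarrow> ('a \<Rightarrow> complex)) \<Rightarrow> bool" where
  "unif_rigid_L2 M T \<longleftrightarrow> (\<exists>ks::nat \<Rightarrow> nat. strict_mono ks \<and> (\<forall>n. 0 < ks n) \<and>
      (\<lambda>n. L2opnorm M (\<lambda>f x. (T ^^ ks n) f x - f x)) \<longlonglongrightarrow> 0)"

end

theory Submission
  imports Defs
begin

text \<open>Recurrence applied to a small ball around the constant function 1 yields exponents \<open>k\<close>
  with \<open>\<phi>\<^sup>k g \<approx> g \<approx> 1\<close> in \<open>L\<^sup>2\<close>, which forces \<open>\<phi>\<^sup>k \<approx> 1\<close> in measure. Such exponents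
  can be taken arbitrarily large: otherwise \<open>\<phi>\<^sup>k = 1\<close> a.e. for some fixed \<open>k\<close>, hence
  also for all its multiples. So a sequence of them has \<open>\<phi>^(k\<^sub>n) \<rightarrow> 1\<close> in measure, and a subsequence converges a.e.
  Conversely, a.e. convergence \<open>\<phi>^(k\<^sub>n) \<rightarrow> 1\<close> forces \<open>|\<phi>| = 1\<close> a.e., so dominated
  convergence gives rigidity, which trivially implies recurrence. Part (B) is the identity
  \<open>\<parallel>M\<^sub>\<psi>\<parallel> = \<parallel>\<psi>\<parallel>\<^sub>\<infinity>\<close> for \<open>\<psi> = \<phi>\<^sup>k - 1\<close>.\<close>

section \<open>Square-integrable and essentially bounded functions\<close>

lemma funpow_Mmul: "(Mmul \<phi> ^^ k) f = (\<lambda>x. \<phi> x ^ k * f x)"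
  by (induction k) (auto simp: Mmul_def)

lemma L2_measurable: "f \<in> L2 M \<Longrightarrow> f \<in> borel_measurable M"
  by (simp add: L2_def)

lemma integrable_L2: "f \<in> L2 M \<Longrightarrow> integrable M (\<lambda>x. (cmod (f x))\<^sup>2)"
  by (simp add: L2_def)

lemma L2_const: "finite_measure M \<Longrightarrow> (\<lambda>x. c) \<in> L2 M"
  by (auto simp: L2_def intro: finite_measure.integrable_const)

lemma L2norm_nonneg: "0 \<le> L2norm M f"
  by (simp add: L2norm_def)

lemma L2norm_power2: "(L2norm M f)\<^sup>2 = (LINT x|M. (cmod (f x))\<^sup>2)"
  by (simp add: L2norm_def)

lemma L2norm_less_imp_integral_less:
  "L2norm M f < r \<Longrightarrow> (LINT x|M. (cmod (f x))\<^sup>2) < r\<^sup>2"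
  by (metis L2norm_nonneg L2norm_power2 power_strict_mono zero_less_numeral)

lemma LinfE:
  assumes "\<psi> \<in> Linf M"
  obtains C where "\<psi> \<in> borel_measurable M" and "AE x in M. cmod (\<psi> x) \<le> C"
  using assms by (auto simp: Linf_def)

lemma Linf_const: "(\<lambda>x. c) \<in> Linf M"
  by (auto simp: Linf_def)

lemma Linf_mult:
  assumes "\<psi> \<in> Linf M" and "\<xi> \<in> Linf M"
  shows "(\<lambda>x. \<psi> x * \<xi> x) \<in> Linf M"
proof -
  obtain C D where [measurable]: "\<psi> \<in> borel_measurable M" "\<xi> \<in> borel_measurable M"
    and C: "AE x in M. cmod (\<psi> x) \<le> C" and D: "AE x in M. cmod (\<xi> x) \<le> D"
    using assms by (metis LinfE)
  from C D have "AE x in M. cmod (\<psi> x * \<xi> x) \<le> C * D"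
    by eventually_elim (auto simp: norm_mult intro: mult_mono order_trans[OF norm_ge_zero])
  then show ?thesis
    unfolding Linf_def by auto
qed

lemma Linf_power: "\<psi> \<in> Linf M \<Longrightarrow> (\<lambda>x. \<psi> x ^ k) \<in> Linf M"
  by (induction k) (auto intro: Linf_const Linf_mult)

lemma Linf_diff:
  assumes "\<psi> \<in> Linf M" and "\<xi> \<in> Linf M"
  shows "(\<lambda>x. \<psi> x - \<xi> x) \<in> Linf M"
proof -
  obtain C D where [measurable]: "\<psi> \<in> borel_measurable M" "\<xi> \<in> borel_measurable M"
    and C: "AE x in M. cmod (\<psi> x) \<le> C" and D: "AE x in M. cmod (\<xi> x) \<le> D"
    using assms by (metis LinfE)
  from C D have "AE x in M. cmod (\<psi> x - \<xi> x) \<le> C + D"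
    by eventually_elim (metis add_mono norm_triangle_ineq4 order_trans)
  then show ?thesis
    unfolding Linf_def by auto
qed

lemma L2_mult_Linf:
  assumes "\<psi> \<in> Linf M" and "f \<in> L2 M"
  shows "(\<lambda>x. \<psi> x * f x) \<in> L2 M"
proof -
  obtain C where [measurable]: "\<psi> \<in> borel_measurable M" and C: "AE x in M. cmod (\<psi> x) \<le> C"
    using assms(1) by (rule LinfE)
  have [measurable]: "f \<in> borel_measurable M"
    using assms(2) by (rule L2_measurable)
  have "integrable M (\<lambda>x. (cmod (\<psi> x * f x))\<^sup>2)"
  proof (rule Bochner_Integration.integrable_bound)
    show "integrable M (\<lambda>x. C\<^sup>2 * (cmod (f x))\<^sup>2)"
      using integrable_L2[OF assms(2)] by simp
    show "AE x in M. norm ((cmod (\<psi> x * f x))\<^sup>2) \<le> norm (C\<^sup>2 * (cmod (f x))\<^sup>2)"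
      using C by eventually_elim
        (simp add: norm_mult power_mult_distrib mult_right_mono power_mono)
  qed measurable
  then show ?thesis
    by (simp add: L2_def)
qed

lemma L2_add:
  assumes "f \<in> L2 M" and "g \<in> L2 M"
  shows "(\<lambda>x. f x + g x) \<in> L2 M"
proof -
  have [measurable]: "f \<in> borel_measurable M" "g \<in> borel_measurable M"
    using assms by (auto intro: L2_measurable)
  have sum_sq: "(cmod (a + b))\<^sup>2 \<le> 2 * (cmod a)\<^sup>2 + 2 * (cmod b)\<^sup>2" for a b :: complex
  proof -
    have "(cmod (a + b))\<^sup>2 \<le> (cmod a + cmod b)\<^sup>2"
      by (simp add: norm_triangle_ineq power_mono)
    also have "\<dots> \<le> 2 * (cmod a)\<^sup>2 + 2 * (cmod b)\<^sup>2"
      using sum_squares_bound[of "cmod a" "cmod b"] by (simp add: power2_sum)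
    finally show ?thesis .
  qed
  have "integrable M (\<lambda>x. (cmod (f x + g x))\<^sup>2)"
    by (rule Bochner_Integration.integrable_bound[where f = "\<lambda>x. 2 * (cmod (f x))\<^sup>2 + 2 * (cmod (g x))\<^sup>2"])
       (use integrable_L2[OF assms(1)] integrable_L2[OF assms(2)] sum_sq in auto)
  then show ?thesis
    by (simp add: L2_def)
qed

lemma L2_diff:
  assumes "f \<in> L2 M" and "g \<in> L2 M"
  shows "(\<lambda>x. f x - g x) \<in> L2 M"
  using L2_add[OF assms(1) L2_mult_Linf[OF Linf_const[of "-1"] assms(2)]] by simp

lemma integrable_L2_norm_mult:
  assumes "f \<in> L2 M" and "g \<in> L2 M"
  shows "integrable M (\<lambda>x. cmod (f x) * cmod (g x))"
proof (rule Bochner_Integration.integrable_bound)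
  have [measurable]: "f \<in> borel_measurable M" "g \<in> borel_measurable M"
    using assms by (auto intro: L2_measurable)
  show "integrable M (\<lambda>x. (cmod (f x))\<^sup>2 + (cmod (g x))\<^sup>2)"
    using integrable_L2[OF assms(1)] integrable_L2[OF assms(2)] by simp
  have "cmod a * cmod b \<le> (cmod a)\<^sup>2 + (cmod b)\<^sup>2" for a b :: complex
    using sum_squares_bound[of "cmod a" "cmod b"] mult_nonneg_nonneg[OF norm_ge_zero[of a] norm_ge_zero[of b]]
    by (simp only: power2_eq_square)
  then show "AE x in M. norm (cmod (f x) * cmod (g x)) \<le> norm ((cmod (f x))\<^sup>2 + (cmod (g x))\<^sup>2)"
    by (simp add: abs_mult)
  show "(\<lambda>x. cmod (f x) * cmod (g x)) \<in> borel_measurable M"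
    by measurable
qed

lemma L2norm_Cauchy_Schwarz:
  assumes "f \<in> L2 M" and "g \<in> L2 M"
  shows "(LINT x|M. cmod (f x) * cmod (g x)) \<le> L2norm M f * L2norm M g"
proof -
  define I where "I = (LINT x|M. cmod (f x) * cmod (g x))"
  define A where "A = (LINT x|M. (cmod (f x))\<^sup>2)"
  define B where "B = (LINT x|M. (cmod (g x))\<^sup>2)"
  have [measurable]: "f \<in> borel_measurable M" "g \<in> borel_measurable M"
    using assms by (auto intro: L2_measurable)
  have "A \<ge> 0" "B \<ge> 0" "I \<ge> 0"
    unfolding A_def B_def I_def by auto
  have "(\<integral>\<^sup>+x. ennreal (cmod (f x)) * ennreal (cmod (g x)) \<partial>M) = ennreal I"
    unfolding I_def ennreal_mult[OF norm_ge_zero norm_ge_zero, symmetric]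
    by (rule nn_integral_eq_integral[OF integrable_L2_norm_mult[OF assms]]) simp
  moreover have "(\<integral>\<^sup>+x. (ennreal (cmod (f x)))\<^sup>2 \<partial>M) = ennreal A"
    unfolding A_def ennreal_power[OF norm_ge_zero]
    by (rule nn_integral_eq_integral[OF integrable_L2[OF assms(1)]]) simp
  moreover have "(\<integral>\<^sup>+x. (ennreal (cmod (g x)))\<^sup>2 \<partial>M) = ennreal B"
    unfolding B_def ennreal_power[OF norm_ge_zero]
    by (rule nn_integral_eq_integral[OF integrable_L2[OF assms(2)]]) simp
  ultimately have "(ennreal I)\<^sup>2 \<le> ennreal A * ennreal B"
    using Cauchy_Schwarz_nn_integral[of "\<lambda>x. ennreal (cmod (f x))" M "\<lambda>x. ennreal (cmod (g x))"]
    by simp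
  then have "ennreal (I\<^sup>2) \<le> ennreal (A * B)"
    by (simp only: ennreal_power[OF \<open>I \<ge> 0\<close>] ennreal_mult[OF \<open>A \<ge> 0\<close> \<open>B \<ge> 0\<close>])
  then have "I\<^sup>2 \<le> A * B"
    using \<open>A \<ge> 0\<close> \<open>B \<ge> 0\<close> by (simp add: ennreal_le_iff)
  then have "I \<le> sqrt A * sqrt B"
    by (simp add: real_le_rsqrt flip: real_sqrt_mult)
  then show ?thesis
    by (simp add: I_def A_def B_def L2norm_def)
qed

lemma L2norm_triangle:
  assumes "f \<in> L2 M" and "g \<in> L2 M"
  shows "L2norm M (\<lambda>x. f x + g x) \<le> L2norm M f + L2norm M g"
proof -
  note int_f = integrable_L2[OF assms(1)] and int_g = integrable_L2[OF assms(2)]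
    and int_fg = integrable_L2_norm_mult[OF assms]
  have "(L2norm M (\<lambda>x. f x + g x))\<^sup>2 \<le>
      (LINT x|M. (cmod (f x))\<^sup>2 + 2 * (cmod (f x) * cmod (g x)) + (cmod (g x))\<^sup>2)"
    unfolding L2norm_power2
  proof (rule integral_mono[OF integrable_L2[OF L2_add[OF assms]]])
    show "integrable M (\<lambda>x. (cmod (f x))\<^sup>2 + 2 * (cmod (f x) * cmod (g x)) + (cmod (g x))\<^sup>2)"
      using int_f int_g int_fg by simp
    show "(cmod (f x + g x))\<^sup>2 \<le> (cmod (f x))\<^sup>2 + 2 * (cmod (f x) * cmod (g x)) + (cmod (g x))\<^sup>2"
      for x
      using power_mono[OF norm_triangle_ineq[of "f x" "g x"] norm_ge_zero, of 2] by (simp add: power2_sum)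
  qed
  also have "\<dots> = (L2norm M f)\<^sup>2 + 2 * (LINT x|M. cmod (f x) * cmod (g x)) + (L2norm M g)\<^sup>2"
    using int_f int_g int_fg by (simp add: L2norm_power2)
  also have "\<dots> \<le> (L2norm M f + L2norm M g)\<^sup>2"
    using L2norm_Cauchy_Schwarz[OF assms] by (simp add: power2_sum)
  finally show ?thesis
    by (rule power2_le_imp_le) (simp add: L2norm_nonneg add_nonneg_nonneg)
qed

lemma L2open_ball:
  assumes "c \<in> L2 M"
  shows "L2open M {g \<in> L2 M. L2norm M (\<lambda>x. g x - c x) < r}"
  unfolding L2open_def
proof (intro conjI ballI)
  fix f assume f: "f \<in> {g \<in> L2 M. L2norm M (\<lambda>x. g x - c x) < r}"
  show "\<exists>e>0. \<forall>g\<in>L2 M. L2norm M (\<lambda>x. g x - f x) < e \<longrightarrow> g \<in> {g \<in> L2 M. L2norm M (\<lambda>x. g x - c x) < r}"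
  proof (intro exI[of _ "r - L2norm M (\<lambda>x. f x - c x)"] conjI ballI impI)
    fix g assume g: "g \<in> L2 M" and close: "L2norm M (\<lambda>x. g x - f x) < r - L2norm M (\<lambda>x. f x - c x)"
    have "L2norm M (\<lambda>x. g x - c x) \<le> L2norm M (\<lambda>x. g x - f x) + L2norm M (\<lambda>x. f x - c x)"
      using L2norm_triangle[OF L2_diff[OF g] L2_diff, of f f c] f assms by simp
    then show "g \<in> {g \<in> L2 M. L2norm M (\<lambda>x. g x - c x) < r}"
      using g close by simp
  qed (use f in simp)
qed auto

section \<open>Recurrence forces a.e. convergence of powers\<close>

text \<open>Truncating at 1 keeps the defect finite without assuming \<open>|\<phi>| \<le> 1\<close>; its tending to 0 along
  a sequence of exponents is convergence in measure of the powers to 1.\<close>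
definition power_defect :: "'a measure \<Rightarrow> ('a \<Rightarrow> complex) \<Rightarrow> nat \<Rightarrow> real" where
  "power_defect M \<phi> k = (LINT x|M. min 1 ((cmod (\<phi> x ^ k - 1))\<^sup>2))"

lemma integrable_truncated_power_dist:
  assumes "finite_measure M" and [measurable]: "\<phi> \<in> borel_measurable M"
  shows "integrable M (\<lambda>x. min 1 ((cmod (\<phi> x ^ k - 1))\<^sup>2))"
  by (rule Bochner_Integration.integrable_bound[where f = "\<lambda>x. 1::real"])
     (auto intro: finite_measure.integrable_const[OF assms(1)])

lemma power_defect_nonneg: "0 \<le> power_defect M \<phi> k"
  by (simp add: power_defect_def)

text \<open>If \<open>|g| < 1/2\<close> then \<open>4 |g - 1|\<^sup>2 \<ge> 1\<close> bounds the left side; otherwise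
  \<open>|z - 1| \<le> 2 |g| |z - 1| \<le> 2 (|z g - 1| + |g - 1|)\<close>.\<close>
lemma truncated_dist_one_le:
  fixes z g :: complex
  shows "min 1 ((cmod (z - 1))\<^sup>2) \<le> 8 * (cmod (z * g - 1))\<^sup>2 + 8 * (cmod (g - 1))\<^sup>2"
proof (cases "cmod g \<ge> 1/2")
  case True
  have "cmod (z - 1) * cmod g = cmod ((z * g - 1) - (g - 1))"
    by (simp add: norm_mult[symmetric] algebra_simps)
  also have "\<dots> \<le> cmod (z * g - 1) + cmod (g - 1)"
    by (rule norm_triangle_ineq4)
  finally have "cmod (z - 1) \<le> 2 * (cmod (z * g - 1) + cmod (g - 1))"
    using True mult_left_mono[OF True, of "cmod (z - 1)"] by simp
  then have "(cmod (z - 1))\<^sup>2 \<le> (2 * (cmod (z * g - 1) + cmod (g - 1)))\<^sup>2"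
    by (simp add: power_mono)
  also have "\<dots> \<le> 8 * (cmod (z * g - 1))\<^sup>2 + 8 * (cmod (g - 1))\<^sup>2"
    using sum_squares_bound[of "cmod (z * g - 1)" "cmod (g - 1)"]
    by (simp add: power2_eq_square algebra_simps)
  finally show ?thesis
    by linarith
next
  case False
  have "1 \<le> cmod (g - 1) + cmod g"
    using norm_triangle_ineq[of "1 - g" g] by (simp add: norm_minus_commute)
  then have "1/2 \<le> cmod (g - 1)"
    using False by simp
  then have "1/4 \<le> (cmod (g - 1))\<^sup>2"
    using mult_mono[of "1/2" "cmod (g - 1)" "1/2" "cmod (g - 1)"] by (simp add: power2_eq_square)
  then have "1 \<le> 8 * (cmod (z * g - 1))\<^sup>2 + 8 * (cmod (g - 1))\<^sup>2"
    using zero_le_power2[of "cmod (z * g - 1)"] by linarith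
  then show ?thesis
    by (rule min.coboundedI1)
qed

lemma recurrent_power_defect_small:
  assumes "finite_measure M" and "\<phi> \<in> Linf M" and "recurrent_L2 M (Mmul \<phi>)" and "0 < \<epsilon>"
  shows "\<exists>k>0. power_defect M \<phi> k < \<epsilon>"
proof -
  define r where "r = sqrt (\<epsilon> / 32)"
  have one: "(\<lambda>x. 1) \<in> L2 M"
    using assms(1) by (rule L2_const)
  define U where "U = {g \<in> L2 M. L2norm M (\<lambda>x. g x - 1) < r}"
  have "L2open M U" and "(\<lambda>x. 1) \<in> U"
    using L2open_ball[OF one, of r] one assms(4) by (simp_all add: U_def L2norm_def r_def)
  then obtain k g where "0 < k" and g: "g \<in> U" and kg: "(\<lambda>x. \<phi> x ^ k * g x) \<in> U"
    using assms(3) by (auto simp: recurrent_L2_def funpow_Mmul)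
  have gL: "g \<in> L2 M"
    using g by (simp add: U_def)
  have [measurable]: "\<phi> \<in> borel_measurable M"
    using assms(2) by (auto elim: LinfE)
  have int_kg: "integrable M (\<lambda>x. (cmod (\<phi> x ^ k * g x - 1))\<^sup>2)"
    by (rule integrable_L2[OF L2_diff[OF L2_mult_Linf[OF Linf_power[OF assms(2)] gL] one]])
  have int_g: "integrable M (\<lambda>x. (cmod (g x - 1))\<^sup>2)"
    by (rule integrable_L2[OF L2_diff[OF gL one]])
  have "power_defect M \<phi> k \<le> (LINT x|M. 8 * (cmod (\<phi> x ^ k * g x - 1))\<^sup>2 + 8 * (cmod (g x - 1))\<^sup>2)"
    unfolding power_defect_def
    by (rule integral_mono[OF integrable_truncated_power_dist[OF assms(1)]])
       (use int_kg int_g truncated_dist_one_le in auto)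
  also have "\<dots> = 8 * (LINT x|M. (cmod (\<phi> x ^ k * g x - 1))\<^sup>2) + 8 * (LINT x|M. (cmod (g x - 1))\<^sup>2)"
    using int_kg int_g by simp
  also have "\<dots> < 16 * r\<^sup>2"
    using L2norm_less_imp_integral_less[of M "\<lambda>x. \<phi> x ^ k * g x - 1" r]
      L2norm_less_imp_integral_less[of M "\<lambda>x. g x - 1" r] g kg
    by (simp add: U_def)
  also have "\<dots> < \<epsilon>"
    using assms(4) by (simp add: r_def)
  finally show ?thesis
    using \<open>0 < k\<close> by blast
qed

lemma power_defect_eq_0_mult:
  assumes "finite_measure M" and "\<phi> \<in> borel_measurable M" and "power_defect M \<phi> k = 0"
  shows "power_defect M \<phi> (m * k) = 0"
proof -
  have "AE x in M. min 1 ((cmod (\<phi> x ^ k - 1))\<^sup>2) = 0"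
    using assms(3) integrable_truncated_power_dist[OF assms(1,2), of k]
    by (simp add: power_defect_def integral_nonneg_eq_0_iff_AE)
  then have "AE x in M. \<phi> x ^ k = 1"
    by eventually_elim (simp add: min_def split: if_split_asm)
  then have "AE x in M. min 1 ((cmod (\<phi> x ^ (m * k) - 1))\<^sup>2) = 0"
    by eventually_elim (simp add: power_mult mult.commute[of m k])
  then show ?thesis
    unfolding power_defect_def by (rule integral_eq_zero_AE)
qed

text \<open>With \<open>\<delta>\<close> below every positive defect at \<open>1, \<dots>, N\<close>, an exponent with defect \<open>< \<delta>\<close>
  either exceeds \<open>N\<close> or has defect 0, and then so has its multiple \<open>(N + 1) k\<close>.\<close>
lemma recurrent_power_defect_small_beyond:
  assumes "finite_measure M" and "\<phi> \<in> Linf M" and "recurrent_L2 M (Mmul \<phi>)" and "0 < \<epsilon>"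
  shows "\<exists>k>N. power_defect M \<phi> k < \<epsilon>"
proof -
  have [measurable]: "\<phi> \<in> borel_measurable M"
    using assms(2) by (auto elim: LinfE)
  define \<delta> where "\<delta> = Min (insert \<epsilon> (power_defect M \<phi> ` {k \<in> {1..N}. 0 < power_defect M \<phi> k}))"
  have \<delta>_le: "\<delta> \<le> \<epsilon>" "\<And>k. k \<in> {1..N} \<Longrightarrow> 0 < power_defect M \<phi> k \<Longrightarrow> \<delta> \<le> power_defect M \<phi> k"
    by (simp_all add: \<delta>_def)
  have "0 < \<delta>"
    using assms(4) by (simp add: \<delta>_def Min_gr_iff)
  then obtain k where "0 < k" and k: "power_defect M \<phi> k < \<delta>"
    using recurrent_power_defect_small[OF assms(1-3)] by blast
  show ?thesis
  proof (cases "N < k")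
    case True
    then show ?thesis
      using k \<delta>_le(1) by auto
  next
    case False
    with \<open>0 < k\<close> k \<delta>_le(2)[of k] have "power_defect M \<phi> k = 0"
      using power_defect_nonneg[of M \<phi> k] by fastforce
    then have "power_defect M \<phi> (Suc N * k) = 0"
      by (intro power_defect_eq_0_mult[OF assms(1)]) auto
    moreover have "N < Suc N * k"
      using \<open>0 < k\<close> by (cases k) auto
    ultimately show ?thesis
      using assms(4) by auto
  qed
qed

lemma exists_subseq_tendsto_0:
  fixes a :: "nat \<Rightarrow> real"
  assumes "\<And>k. 0 \<le> a k" and "\<And>\<epsilon> N. 0 < \<epsilon> \<Longrightarrow> \<exists>k>N. a k < \<epsilon>"
  shows "\<exists>ks. strict_mono ks \<and> (\<forall>n. 0 < ks n) \<and> (\<lambda>n. a (ks n)) \<longlonglongrightarrow> 0"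
proof -
  have "\<exists>ks. \<forall>n. (0 < ks n \<and> a (ks n) < inverse (Suc n)) \<and> ks n < ks (Suc n)"
  proof (rule dependent_nat_choice)
    show "\<exists>k. 0 < k \<and> a k < inverse (Suc 0)"
      using assms(2)[of 1 0] by auto
    show "\<exists>k'. (0 < k' \<and> a k' < inverse (Suc (Suc n))) \<and> k < k'" for k n
    proof -
      obtain k' where "k < k'" and "a k' < inverse (Suc (Suc n))"
        using assms(2)[of "inverse (Suc (Suc n))" k] by auto
      then show ?thesis
        by (intro exI[of _ k']) simp
    qed
  qed
  then obtain ks where ks: "\<And>n. 0 < ks n" "\<And>n. a (ks n) < inverse (Suc n)" "\<And>n. ks n < ks (Suc n)"
    by blast
  have "(\<lambda>n. a (ks n)) \<longlonglongrightarrow> 0"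
  proof (rule tendsto_sandwich[OF _ _ tendsto_const LIMSEQ_inverse_real_of_nat])
    show "\<forall>\<^sub>F n in sequentially. 0 \<le> a (ks n)"
      by (simp add: assms(1))
    show "\<forall>\<^sub>F n in sequentially. a (ks n) \<le> inverse (real (Suc n))"
      by (intro always_eventually allI less_imp_le ks(2))
  qed
  then show ?thesis
    using ks by (auto simp: strict_mono_Suc_iff)
qed

lemma tendsto_if_truncated_dist_tendsto_0:
  fixes w :: "nat \<Rightarrow> 'b::metric_space"
  assumes "(\<lambda>n. min 1 ((dist (w n) l)\<^sup>2)) \<longlonglongrightarrow> 0"
  shows "w \<longlonglongrightarrow> l"
proof -
  have sqrt_eq: "sqrt (min 1 (t\<^sup>2)) = t" if "min 1 (t\<^sup>2) < 1" and "0 \<le> t" for t :: real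
    using that by (simp add: min_less_iff_disj min.absorb2 less_imp_le)
  have "(\<lambda>n. sqrt (min 1 ((dist (w n) l)\<^sup>2))) \<longlonglongrightarrow> 0"
    using tendsto_real_sqrt[OF assms] by simp
  moreover have "eventually (\<lambda>n. sqrt (min 1 ((dist (w n) l)\<^sup>2)) = dist (w n) l) sequentially"
    using order_tendstoD(2)[OF assms zero_less_one]
    by eventually_elim (rule sqrt_eq, assumption, rule zero_le_dist)
  ultimately have "(\<lambda>n. dist (w n) l) \<longlonglongrightarrow> 0"
    by (rule Lim_transform_eventually)
  then show ?thesis
    by (rule tendsto_dist_iff[THEN iffD2])
qed

lemma power_defect_tendsto_0_imp_AE:
  assumes "finite_measure M" and "\<phi> \<in> borel_measurable M"
    and "strict_mono ks" and "\<forall>n. 0 < ks n" and "(\<lambda>n. power_defect M \<phi> (ks n)) \<longlonglongrightarrow> 0"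
  shows "\<exists>ks'. strict_mono ks' \<and> (\<forall>n. 0 < ks' n) \<and> (AE x in M. (\<lambda>n. \<phi> x ^ ks' n) \<longlonglongrightarrow> 1)"
proof -
  define u where "u n x = min 1 ((cmod (\<phi> x ^ ks n - 1))\<^sup>2)" for n x
  have "integrable M (u n)" for n
    unfolding u_def by (rule integrable_truncated_power_dist[OF assms(1,2)])
  moreover have "(\<lambda>n. \<integral>x. norm (u n x) \<partial>M) \<longlonglongrightarrow> 0"
    using assms(5) by (simp add: u_def power_defect_def)
  ultimately obtain r where "strict_mono r" and r: "AE x in M. (\<lambda>n. u (r n) x) \<longlonglongrightarrow> 0"
    using tendsto_L1_AE_subseq by blast
  have "AE x in M. (\<lambda>n. \<phi> x ^ (ks \<circ> r) n) \<longlonglongrightarrow> 1"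
    using r by eventually_elim (rule tendsto_if_truncated_dist_tendsto_0, simp add: u_def dist_norm)
  moreover have "strict_mono (ks \<circ> r)"
    using assms(3) \<open>strict_mono r\<close> by (rule strict_mono_o)
  ultimately show ?thesis
    using assms(4) by (intro exI[of _ "ks \<circ> r"]) auto
qed

lemma recurrent_imp_AE_powers_tendsto_1:
  assumes "finite_measure M" and "\<phi> \<in> Linf M" and "recurrent_L2 M (Mmul \<phi>)"
  shows "\<exists>ks. strict_mono ks \<and> (\<forall>n. 0 < ks n) \<and> (AE x in M. (\<lambda>n. \<phi> x ^ ks n) \<longlonglongrightarrow> 1)"
proof -
  have "\<phi> \<in> borel_measurable M"
    using assms(2) by (auto elim: LinfE)
  moreover obtain ks where "strict_mono ks" "\<forall>n. 0 < ks n" "(\<lambda>n. power_defect M \<phi> (ks n)) \<longlonglongrightarrow> 0"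
    using exists_subseq_tendsto_0[OF power_defect_nonneg recurrent_power_defect_small_beyond[OF assms]]
    by blast
  ultimately show ?thesis
    by (rule power_defect_tendsto_0_imp_AE[OF assms(1)])
qed

section \<open>Rigidity\<close>

lemma norm_eq_1_if_subseq_powers_tendsto_1:
  fixes z :: "'b::real_normed_div_algebra"
  assumes "strict_mono ks" and "(\<lambda>n. z ^ ks n) \<longlonglongrightarrow> 1"
  shows "norm z = 1"
proof -
  have subseq_powers_tendsto_0: "(\<lambda>n. b ^ ks n) \<longlonglongrightarrow> 0" if "0 \<le> b" and "b < 1" for b :: real
    using LIMSEQ_subseq_LIMSEQ[OF LIMSEQ_realpow_zero[OF that] assms(1)] by (simp add: o_def)
  have norm_lim: "(\<lambda>n. norm z ^ ks n) \<longlonglongrightarrow> 1"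
    using tendsto_norm[OF assms(2)] by (simp add: norm_power)
  show ?thesis
  proof (rule linorder_cases[of "norm z" 1])
    assume "norm z < 1"
    then show ?thesis
      using LIMSEQ_unique[OF subseq_powers_tendsto_0 norm_lim] by simp
  next
    assume "norm z > 1"
    then have "(\<lambda>n. inverse (norm z) ^ ks n) \<longlonglongrightarrow> 0"
      by (intro subseq_powers_tendsto_0) (auto simp: inverse_less_1_iff)
    moreover have "(\<lambda>n. inverse (norm z) ^ ks n) \<longlonglongrightarrow> 1"
      using tendsto_inverse[OF norm_lim] by (simp add: power_inverse)
    ultimately show ?thesis
      using LIMSEQ_unique by fastforce
  qed
qed

lemma AE_norm_eq_1_if_AE_powers_tendsto_1:
  assumes "strict_mono ks" and "AE x in M. (\<lambda>n. \<phi> x ^ ks n) \<longlonglongrightarrow> 1"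
  shows "AE x in M. cmod (\<phi> x) = 1"
  using assms(2) by eventually_elim (rule norm_eq_1_if_subseq_powers_tendsto_1[OF assms(1)])

text \<open>Since \<open>|\<phi>| = 1\<close> a.e., the integrands \<open>|\<phi>\<^sup>k f - f|\<^sup>2\<close> are dominated by \<open>4 |f|\<^sup>2\<close>.\<close>
lemma AE_powers_tendsto_1_imp_rigid:
  assumes [measurable]: "\<phi> \<in> borel_measurable M"
    and "strict_mono ks" and "\<forall>n. 0 < ks n" and lim: "AE x in M. (\<lambda>n. \<phi> x ^ ks n) \<longlonglongrightarrow> 1"
  shows "rigid_L2 M (Mmul \<phi>)"
  unfolding rigid_L2_def
proof (intro exI[of _ ks] conjI ballI)
  fix f assume "f \<in> L2 M"
  then have [measurable]: "f \<in> borel_measurable M"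
    by (rule L2_measurable)
  have "AE x in M. cmod (\<phi> x) = 1"
    using assms(2) lim by (rule AE_norm_eq_1_if_AE_powers_tendsto_1)
  then have dominated: "AE x in M. norm ((cmod (\<phi> x ^ ks n * f x - f x))\<^sup>2) \<le> 4 * (cmod (f x))\<^sup>2" for n
  proof eventually_elim
    case (elim x)
    have "cmod (\<phi> x ^ ks n * f x - f x) \<le> 2 * cmod (f x)"
      using norm_triangle_ineq4[of "\<phi> x ^ ks n * f x" "f x"] elim by (simp add: norm_mult norm_power)
    then show ?case
      using power_mono[of _ _ 2] by (fastforce simp: power_mult_distrib)
  qed
  have "(\<lambda>n. LINT x|M. (cmod (\<phi> x ^ ks n * f x - f x))\<^sup>2) \<longlonglongrightarrow> (LINT x|M. 0)"
  proof (rule integral_dominated_convergence[where w = "\<lambda>x. 4 * (cmod (f x))\<^sup>2"])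
    show "integrable M (\<lambda>x. 4 * (cmod (f x))\<^sup>2)"
      using integrable_L2[OF \<open>f \<in> L2 M\<close>] by simp
    show "AE x in M. (\<lambda>n. (cmod (\<phi> x ^ ks n * f x - f x))\<^sup>2) \<longlonglongrightarrow> 0"
      using lim
    proof eventually_elim
      case (elim x)
      have "(\<lambda>n. (cmod (\<phi> x ^ ks n * f x - f x))\<^sup>2) \<longlonglongrightarrow> (cmod (1 * f x - f x))\<^sup>2"
        by (intro tendsto_intros elim)
      then show ?case
        by simp
    qed
  qed (use dominated in measurable)
  then have "(\<lambda>n. sqrt (LINT x|M. (cmod (\<phi> x ^ ks n * f x - f x))\<^sup>2)) \<longlonglongrightarrow> 0"
    using tendsto_real_sqrt by fastforce
  then show "(\<lambda>n. L2norm M (\<lambda>x. (Mmul \<phi> ^^ ks n) f x - f x)) \<longlonglongrightarrow> 0"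
    by (simp add: L2norm_def funpow_Mmul)
qed (use assms in auto)

lemma rigid_imp_recurrent:
  assumes "\<And>k f. f \<in> L2 M \<Longrightarrow> (T ^^ k) f \<in> L2 M" and "rigid_L2 M T"
  shows "recurrent_L2 M T"
  unfolding recurrent_L2_def
proof (intro allI impI)
  fix U assume "L2open M U \<and> U \<noteq> {}"
  then obtain f e where "f \<in> U" "f \<in> L2 M" "0 < e"
    and U: "\<And>g. g \<in> L2 M \<Longrightarrow> L2norm M (\<lambda>x. g x - f x) < e \<Longrightarrow> g \<in> U"
    unfolding L2open_def by blast
  obtain ks where "\<forall>n. 0 < ks n"
    and "(\<lambda>n. L2norm M (\<lambda>x. (T ^^ ks n) f x - f x)) \<longlonglongrightarrow> 0"
    using assms(2) \<open>f \<in> L2 M\<close> unfolding rigid_L2_def by blast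
  then obtain n where "L2norm M (\<lambda>x. (T ^^ ks n) f x - f x) < e"
    using eventually_happens'[OF sequentially_bot order_tendstoD(2)] \<open>0 < e\<close> by blast
  then have "(T ^^ ks n) f \<in> U"
    by (intro U assms(1) \<open>f \<in> L2 M\<close>)
  then show "\<exists>k>0. \<exists>g\<in>U. (T ^^ k) g \<in> U"
    using \<open>\<forall>n. 0 < ks n\<close> \<open>f \<in> U\<close> by blast
qed

section \<open>The norm of a multiplication operator\<close>

lemma Linf_norm_le:
  assumes "0 \<le> c" and "AE x in M. cmod (\<psi> x) \<le> c"
  shows "Linf_norm M \<psi> \<le> c"
  unfolding Linf_norm_def by (rule cInf_lower) (use assms in auto)

lemma Linf_nonneg_bound:
  assumes "\<psi> \<in> Linf M"
  shows "\<exists>C\<ge>0. AE x in M. cmod (\<psi> x) \<le> C"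
proof -
  obtain C where "AE x in M. cmod (\<psi> x) \<le> C"
    using assms by (rule LinfE)
  then have "AE x in M. cmod (\<psi> x) \<le> max 0 C"
    by eventually_elim simp
  then show ?thesis
    by (intro exI[of _ "max 0 C"]) simp
qed

lemma Linf_norm_nonneg:
  assumes "\<psi> \<in> Linf M"
  shows "0 \<le> Linf_norm M \<psi>"
  unfolding Linf_norm_def by (rule cInf_greatest) (use Linf_nonneg_bound[OF assms] in auto)

lemma AE_norm_le_Linf_norm:
  assumes "\<psi> \<in> Linf M"
  shows "AE x in M. cmod (\<psi> x) \<le> Linf_norm M \<psi>"
proof -
  define S where "S = {C. 0 \<le> C \<and> (AE x in M. cmod (\<psi> x) \<le> C)}"
  have "S \<noteq> {}" and "bdd_below S"
    using Linf_nonneg_bound[OF assms] by (auto simp: S_def bdd_below_def)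
  moreover have "Linf_norm M \<psi> = Inf S"
    by (simp add: S_def Linf_norm_def)
  ultimately have below: "\<exists>C\<in>S. C < Linf_norm M \<psi> + inverse (real (Suc n))" for n
    using cInf_less_iff[of S "Inf S + inverse (real (Suc n))"] by simp
  have "AE x in M. cmod (\<psi> x) \<le> Linf_norm M \<psi> + inverse (real (Suc n))" for n
  proof -
    obtain C where "AE x in M. cmod (\<psi> x) \<le> C" and "C < Linf_norm M \<psi> + inverse (real (Suc n))"
      using below[of n] by (auto simp: S_def)
    then show ?thesis
      by (auto elim: eventually_mono)
  qed
  then have "AE x in M. \<forall>n. cmod (\<psi> x) \<le> Linf_norm M \<psi> + inverse (real (Suc n))"
    by (simp add: AE_all_countable)
  then show ?thesis
    by eventually_elim (auto intro: LIMSEQ_le_const[OF LIMSEQ_inverse_real_of_nat_add])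
qed

lemma L2norm_mult_le:
  assumes "\<psi> \<in> Linf M" and "f \<in> L2 M"
  shows "L2norm M (\<lambda>x. \<psi> x * f x) \<le> Linf_norm M \<psi> * L2norm M f"
proof -
  define L where "L = Linf_norm M \<psi>"
  have "(L2norm M (\<lambda>x. \<psi> x * f x))\<^sup>2 \<le> (LINT x|M. L\<^sup>2 * (cmod (f x))\<^sup>2)"
    unfolding L2norm_power2
  proof (rule integral_mono_AE)
    show "integrable M (\<lambda>x. (cmod (\<psi> x * f x))\<^sup>2)"
      by (rule integrable_L2[OF L2_mult_Linf[OF assms]])
    show "integrable M (\<lambda>x. L\<^sup>2 * (cmod (f x))\<^sup>2)"
      using integrable_L2[OF assms(2)] by simp
    show "AE x in M. (cmod (\<psi> x * f x))\<^sup>2 \<le> L\<^sup>2 * (cmod (f x))\<^sup>2"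
      using AE_norm_le_Linf_norm[OF assms(1)] unfolding L_def[symmetric]
      by eventually_elim (simp add: norm_mult power_mult_distrib mult_right_mono power_mono)
  qed
  also have "\<dots> = (L * L2norm M f)\<^sup>2"
    by (simp add: L2norm_power2 power_mult_distrib)
  finally show ?thesis
    unfolding L_def
    by (rule power2_le_imp_le) (simp add: Linf_norm_nonneg[OF assms(1)] L2norm_nonneg)
qed

text \<open>The witness is the normalised indicator of \<open>{|\<psi>| > c}\<close>, a set of positive measure.\<close>
lemma exists_L2_unit_mult_ge:
  assumes "finite_measure M" and "\<psi> \<in> Linf M" and "0 \<le> c" and "c < Linf_norm M \<psi>"
  shows "\<exists>f\<in>L2 M. L2norm M f = 1 \<and> c \<le> L2norm M (\<lambda>x. \<psi> x * f x)"
proof -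
  have [measurable]: "\<psi> \<in> borel_measurable M"
    using assms(2) by (auto elim: LinfE)
  define A where "A = {x\<in>space M. c < cmod (\<psi> x)}"
  have [measurable]: "A \<in> sets M"
    unfolding A_def by measurable
  have "emeasure M A \<noteq> 0"
  proof
    assume "emeasure M A = 0"
    then have "AE x in M. cmod (\<psi> x) \<le> c"
      by (subst AE_iff_measurable[OF \<open>A \<in> sets M\<close>]) (auto simp: A_def not_le)
    with Linf_norm_le[OF assms(3)] assms(4) show False
      by fastforce
  qed
  then have "0 < measure M A"
    using finite_measure.emeasure_eq_measure[OF assms(1)] by (simp add: zero_less_measure_iff)
  define a where "a = measure M A"
  define f where "f x = complex_of_real (indicator A x / sqrt a)" for x
  have f_sq: "(cmod (f x))\<^sup>2 = indicator A x / a" for x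
  proof -
    have "(cmod (f x))\<^sup>2 = (indicator A x / sqrt a)\<^sup>2"
      by (simp only: f_def norm_of_real power2_abs)
    also have "\<dots> = indicator A x / a"
      using \<open>0 < measure M A\<close> by (simp add: a_def power_divide indicator_def)
    finally show ?thesis .
  qed
  have int_A: "integrable M (\<lambda>x. d * (indicator A x / a))" for d :: real
    using finite_measure.emeasure_finite[OF assms(1)] by (simp add: less_top)
  have [measurable]: "f \<in> borel_measurable M"
    unfolding f_def by measurable
  then have "f \<in> L2 M"
    using int_A[of 1] by (simp add: L2_def f_sq)
  moreover have "L2norm M f = 1"
    using \<open>0 < measure M A\<close> by (simp add: L2norm_def f_sq a_def Int_absorb2 sets.sets_into_space)
  moreover have "c\<^sup>2 \<le> (L2norm M (\<lambda>x. \<psi> x * f x))\<^sup>2"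
  proof -
    have "c\<^sup>2 = (LINT x|M. c\<^sup>2 * (indicator A x / a))"
      using \<open>0 < measure M A\<close> by (simp add: a_def Int_absorb2 sets.sets_into_space)
    also have "\<dots> \<le> (LINT x|M. (cmod (\<psi> x * f x))\<^sup>2)"
    proof (rule integral_mono[OF int_A integrable_L2[OF L2_mult_Linf[OF assms(2) \<open>f \<in> L2 M\<close>]]])
      show "c\<^sup>2 * (indicator A x / a) \<le> (cmod (\<psi> x * f x))\<^sup>2" for x
        using assms(3) \<open>0 < measure M A\<close> 
        by (auto simp: norm_mult power_mult_distrib f_sq A_def a_def indicator_def
            intro!: divide_right_mono power_mono)
    qed
    finally show ?thesis
      by (simp add: L2norm_power2)
  qed
  then have "c \<le> L2norm M (\<lambda>x. \<psi> x * f x)"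
    by (rule power2_le_imp_le[OF _ L2norm_nonneg])
  ultimately show ?thesis
    by blast
qed

lemma L2opnorm_mult:
  assumes "finite_measure M" and "\<psi> \<in> Linf M"
  shows "L2opnorm M (\<lambda>f x. \<psi> x * f x) = Linf_norm M \<psi>"
proof -
  define T where "T = {L2norm M (\<lambda>x. \<psi> x * f x) | f. f \<in> L2 M \<and> L2norm M f \<le> 1}"
  have "0 \<in> T"
    using L2_const[OF assms(1), of 0] by (auto simp: T_def L2norm_def intro!: exI[of _ "\<lambda>x. 0"])
  have T_le: "t \<le> Linf_norm M \<psi>" if t: "t \<in> T" for t
  proof -
    obtain f where "f \<in> L2 M" "L2norm M f \<le> 1" and "t = L2norm M (\<lambda>x. \<psi> x * f x)"
      using t unfolding T_def by blast
    then have "t \<le> Linf_norm M \<psi> * L2norm M f"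
      using L2norm_mult_le[OF assms(2)] by simp
    also have "\<dots> \<le> Linf_norm M \<psi>"
      using \<open>L2norm M f \<le> 1\<close> Linf_norm_nonneg[OF assms(2)] L2norm_nonneg[of M f]
      by (simp add: mult_left_le)
    finally show ?thesis .
  qed
  have "Sup T \<le> Linf_norm M \<psi>"
    using \<open>0 \<in> T\<close> T_le by (intro cSup_least) auto
  moreover have "Linf_norm M \<psi> \<le> Sup T"
  proof (cases "Linf_norm M \<psi> = 0")
    case True
    then show ?thesis
      using cSup_upper[OF \<open>0 \<in> T\<close> bdd_aboveI[OF T_le]] by simp
  next
    case False
    then have "0 < Linf_norm M \<psi>"
      using Linf_norm_nonneg[OF assms(2)] by simp
    then show ?thesis
    proof (rule dense_le_bounded)
      fix c assume "0 < c" and "c < Linf_norm M \<psi>"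
      then obtain f where "f \<in> L2 M" "L2norm M f = 1" and "c \<le> L2norm M (\<lambda>x. \<psi> x * f x)"
        using exists_L2_unit_mult_ge[OF assms less_imp_le] by blast
      then show "c \<le> Sup T"
        by (intro cSup_upper2[OF _ _ bdd_aboveI[OF T_le]]) (auto simp: T_def)
    qed
  qed
  ultimately show ?thesis
    by (simp add: L2opnorm_def T_def)
qed

theorem theorem7p6:
  fixes M :: "'a::topological_space measure" and \<phi> :: "'a \<Rightarrow> complex"
  assumes "finite_measure M" and "sets M = sets borel" and "\<phi> \<in> Linf M"
  shows "(recurrent_L2 M (Mmul \<phi>) \<longleftrightarrow> rigid_L2 M (Mmul \<phi>))
       \<and> (rigid_L2 M (Mmul \<phi>) \<longleftrightarrow>
           (\<exists>ks::nat \<Rightarrow> nat. strict_mono ks \<and> (\<forall>n. 0 < ks n) \<and>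
              (AE x in M. (\<lambda>n. \<phi> x ^ ks n) \<longlonglongrightarrow> 1)))
       \<and> (unif_rigid_L2 M (Mmul \<phi>) \<longleftrightarrow>
           (\<exists>ks::nat \<Rightarrow> nat. strict_mono ks \<and> (\<forall>n. 0 < ks n) \<and>
              (\<lambda>n. Linf_norm M (\<lambda>x. \<phi> x ^ ks n - 1)) \<longlonglongrightarrow> 0))
       \<and> (recurrent_L2 M (Mmul \<phi>) \<longrightarrow> (AE x in M. cmod (\<phi> x) = 1))"
proof -
  have \<phi>_meas: "\<phi> \<in> borel_measurable M"
    using assms(3) by (auto elim: LinfE)
  have rigid_recurrent: "rigid_L2 M (Mmul \<phi>) \<Longrightarrow> recurrent_L2 M (Mmul \<phi>)"
    by (rule rigid_imp_recurrent)
       (simp add: funpow_Mmul L2_mult_Linf[OF Linf_power[OF assms(3)]])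
  have recurrent_AE: "recurrent_L2 M (Mmul \<phi>) \<Longrightarrow> \<exists>ks. strict_mono ks \<and> (\<forall>n. 0 < ks n) \<and>
      (AE x in M. (\<lambda>n. \<phi> x ^ ks n) \<longlonglongrightarrow> 1)"
    by (rule recurrent_imp_AE_powers_tendsto_1[OF assms(1,3)])
  have AE_rigid: "strict_mono ks \<Longrightarrow> \<forall>n. 0 < ks n \<Longrightarrow> AE x in M. (\<lambda>n. \<phi> x ^ ks n) \<longlonglongrightarrow> 1 \<Longrightarrow>
      rigid_L2 M (Mmul \<phi>)" for ks
    by (rule AE_powers_tendsto_1_imp_rigid[OF \<phi>_meas])
  have opnorm: "L2opnorm M (\<lambda>f x. (Mmul \<phi> ^^ k) f x - f x) = Linf_norm M (\<lambda>x. \<phi> x ^ k - 1)" for k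
    using L2opnorm_mult[OF assms(1) Linf_diff[OF Linf_power[OF assms(3)] Linf_const[where c = 1]]]
    by (simp add: funpow_Mmul left_diff_distrib)
  show ?thesis
    unfolding unif_rigid_L2_def opnorm using rigid_recurrent recurrent_AE AE_rigid AE_norm_eq_1_if_AE_powers_tendsto_1 by blast
qed

end
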